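(* Let $R$ be a run of a distributed program $\Pi$ and let $X$ be an agent (module) of $\Pi$ that is immediate in $R$. Then (1) the set of moments $t\ge0$ at which $X$ is enabled is discrete (has no limit point in $[0,\infty)$); (2) if $X$ is enabled at a moment $t$, then $X$ is disabled at $t+$ (i.e. on some interval $(t,t+\epsilon)$) and, if $t>0$, at $t-$ (i.e. on some interval $(t-\epsilon,t)$).
   Context: A distributed program $\Pi$ is given by a vocabulary $\Upsilon$ (containing a universe symbol Reals, interpreted as the real numbers, and not containing the nullary symbol $\mathrm{CT}$) together with a finite set of modules; each module is a rule built from update rules, conditionals, blocks and parallel declarations, and is executed by its own agent. Executing a module at a state means computing the set of updates (location, new value) it generates and performing them simultaneously; an inconsistent update set does nothing. A module is enabled at a state if its update set is consistent and contains at least one update that changes the state, and disabled otherwise. Function symbols are static, internal (changed only by executing modules) or external (changed only by the environment). States are structures of vocabulary $\Upsilon\cup\{\mathrm{CT}\}$ with $\mathrm{CT}$ real. A pre-run is a map $t\mapsto R(t)$, $t\in[0,\infty)$, to states with a common superuniverse, $\mathrm{CT}=t$ in $R(t)$, and such that, writing $\rho(t)$ for the reduct of $R(t)$ to $\Upsilon$, for every $\tau>0$ there are $0=t_0<\dots<t_n=\tau$ with $\rho$ constant on each $(t_i,t_{i+1})$; $\rho(t+)$, $\rho(t-)$ denote the one-sided constant values. A pre-run is a run of $\Pi$ if (i) whenever $\rho(t+)\ne\rho(t)$, $\rho(t+)$ is the $\Upsilon$-reduct of the state obtained by executing some modules $M_1,\dots,M_k$ at $R(t)$ (these agents are said to fire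 at $t$), and external functions agree in $\rho(t)$ and $\rho(t+)$; (ii) whenever $t>0$ and $\rho(t)\neq\rho(t-)$, they differ only in external functions. An agent is immediate (in $R$) if it fires at every moment at which it is enabled. *)

theory Defs
  imports "HOL-Analysis.Analysis"
begin

text \<open>Function symbols of the vocabulary Upsilon are the elements of the type 'f;
  the extra nullary symbol CT (current time) is added by the type constructor sym.\<close>
datatype 'f sym = Sym 'f | CT

datatype fkind = Static | Internal | External

datatype 'a val = RealV real | TrueV | FalseV | UndefV | Atom 'a

type_synonym ('f,'a) state = "'f sym \<Rightarrow> 'a val list \<Rightarrow> 'a val"
type_synonym ('f,'a) ustate = "'f \<Rightarrow> 'a val list \<Rightarrow> 'a val"

datatype ('f,'v) trm =
    Var 'v
  | App "'f sym" "('f,'v) trm list"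
  | TrueT | FalseT | UndefT
  | Eq "('f,'v) trm" "('f,'v) trm"
  | Neg "('f,'v) trm"
  | Conj "('f,'v) trm" "('f,'v) trm"

text \<open>Rules: update rules, conditionals, blocks and parallel declarations
  (do for all v in universe U: R).\<close>
datatype ('f,'v) rule =
    Skip
  | Upd 'f "('f,'v) trm list" "('f,'v) trm"
  | Cond "('f,'v) trm" "('f,'v) rule" "('f,'v) rule"
  | Block "('f,'v) rule list"
  | Par 'v 'f "('f,'v) rule"

record ('f,'v) program =
  arity :: "'f \<Rightarrow> nat"
  kind :: "'f \<Rightarrow> fkind"
  reals_sym :: 'f
  modules :: "('f,'v) rule set"

fun bool_val :: "bool \<Rightarrow> 'a val" where
  "bool_val b = (if b then TrueV else FalseV)"

fun eval :: "('f,'a) state \<Rightarrow> ('v \<Rightarrow> 'a val) \<Rightarrow> ('f,'v) trm \<Rightarrow> 'a val" where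
  "eval I \<nu> (Var v) = \<nu> v"
| "eval I \<nu> (App f ts) = I f (map (eval I \<nu>) ts)"
| "eval I \<nu> TrueT = TrueV"
| "eval I \<nu> FalseT = FalseV"
| "eval I \<nu> UndefT = UndefV"
| "eval I \<nu> (Eq s t) = bool_val (eval I \<nu> s = eval I \<nu> t)"
| "eval I \<nu> (Neg s) = bool_val (eval I \<nu> s \<noteq> TrueV)"
| "eval I \<nu> (Conj s t) = bool_val (eval I \<nu> s = TrueV \<and> eval I \<nu> t = TrueV)"

type_synonym ('f,'a) update = "'f \<times> 'a val list \<times> 'a val"

fun updates :: "('f,'a) state \<Rightarrow> ('v \<Rightarrow> 'a val) \<Rightarrow> ('f,'v) rule \<Rightarrow> ('f,'a) update set" where
  "updates I \<nu> Skip = {}"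
| "updates I \<nu> (Upd f ts t) = {(f, map (eval I \<nu>) ts, eval I \<nu> t)}"
| "updates I \<nu> (Cond g r1 r2) =
     (if eval I \<nu> g = TrueV then updates I \<nu> r1 else updates I \<nu> r2)"
| "updates I \<nu> (Block rs) = (\<Union>r\<in>set rs. updates I \<nu> r)"
| "updates I \<nu> (Par v U r) =
     (\<Union>x\<in>{x. I (Sym U) [x] = TrueV}. updates I (\<nu>(v := x)) r)"

text \<open>Modules are closed rules; they are evaluated in the empty environment.\<close>
definition module_updates :: "('f,'a) state \<Rightarrow> ('f,'v) rule \<Rightarrow> ('f,'a) update set" where
  "module_updates I M = updates I (\<lambda>_. UndefV) M"

definition consistent :: "('f,'a) update set \<Rightarrow> bool" where
  "consistent U \<longleftrightarrow> (\<forall>f args v w. (f,args,v) \<in> U \<longrightarrow> (f,args,w) \<in> U \<longrightarrow> v = w)"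

definition fire_updates :: "('f,'a) update set \<Rightarrow> ('f,'a) state \<Rightarrow> ('f,'a) state" where
  "fire_updates U I =
     (if consistent U then
        (\<lambda>g args. case g of
            Sym f \<Rightarrow> (if \<exists>v. (f,args,v) \<in> U then (THE v. (f,args,v) \<in> U) else I g args)
          | CT \<Rightarrow> I g args)
      else I)"

definition exec :: "('f,'v) rule set \<Rightarrow> ('f,'a) state \<Rightarrow> ('f,'a) state" where
  "exec S I = fire_updates (\<Union>M\<in>S. module_updates I M) I"

definition enabled :: "('f,'v) rule \<Rightarrow> ('f,'a) state \<Rightarrow> bool" where
  "enabled M I \<longleftrightarrow> consistent (module_updates I M) \<and>
     (\<exists>f args v. (f,args,v) \<in> module_updates I M \<and> I (Sym f) args \<noteq> v)"

definition reduct :: "('f,'a) state \<Rightarrow> ('f,'a) ustate" where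
  "reduct I = (\<lambda>f. I (Sym f))"

fun rule_wf :: "('f,'v) program \<Rightarrow> ('f,'v) rule \<Rightarrow> bool" where
  "rule_wf P Skip = True"
| "rule_wf P (Upd f ts t) = (kind P f = Internal \<and> length ts = arity P f)"
| "rule_wf P (Cond g r1 r2) = (rule_wf P r1 \<and> rule_wf P r2)"
| "rule_wf P (Block rs) = (\<forall>r\<in>set rs. rule_wf P r)"
| "rule_wf P (Par v U r) = (arity P U = 1 \<and> rule_wf P r)"

definition program_wf :: "('f,'v) program \<Rightarrow> bool" where
  "program_wf P \<longleftrightarrow> finite (modules P) \<and> arity P (reals_sym P) = 1 \<and>
     kind P (reals_sym P) = Static \<and> (\<forall>M\<in>modules P. rule_wf P M)"

definition is_state :: "('f,'v) program \<Rightarrow> ('f,'a) state \<Rightarrow> bool" where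
  "is_state P I \<longleftrightarrow>
     (\<forall>f args. length args \<noteq> arity P f \<longrightarrow> I (Sym f) args = UndefV) \<and>
     (\<forall>args. args \<noteq> [] \<longrightarrow> I CT args = UndefV) \<and>
     (\<exists>r. I CT [] = RealV r) \<and>
     (\<forall>x. I (Sym (reals_sym P)) [x] = (if \<exists>r. x = RealV r then TrueV else FalseV))"

type_synonym ('f,'a) prerun = "real \<Rightarrow> ('f,'a) state"

definition rho :: "('f,'a) prerun \<Rightarrow> real \<Rightarrow> ('f,'a) ustate" where
  "rho R t = reduct (R t)"

definition rho_plus :: "('f,'a) prerun \<Rightarrow> real \<Rightarrow> ('f,'a) ustate" where
  "rho_plus R t = (THE \<sigma>. \<exists>\<epsilon>>0. \<forall>s\<in>{t<..<t+\<epsilon>}. rho R s = \<sigma>)"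

definition rho_minus :: "('f,'a) prerun \<Rightarrow> real \<Rightarrow> ('f,'a) ustate" where
  "rho_minus R t = (THE \<sigma>. \<exists>\<epsilon>>0. \<forall>s\<in>{t-\<epsilon><..<t}. rho R s = \<sigma>)"

definition pre_run :: "('f,'v) program \<Rightarrow> ('f,'a) prerun \<Rightarrow> bool" where
  "pre_run P R \<longleftrightarrow>
     (\<forall>t\<ge>0. is_state P (R t) \<and> R t CT [] = RealV t) \<and>
     (\<forall>\<tau>>0. \<exists>(ts::nat \<Rightarrow> real) n. ts 0 = 0 \<and> ts n = \<tau> \<and>
        (\<forall>i<n. ts i < ts (Suc i)) \<and>
        (\<forall>i<n. \<forall>s\<in>{ts i<..<ts (Suc i)}. \<forall>s'\<in>{ts i<..<ts (Suc i)}. rho R s = rho R s'))"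

definition is_run :: "('f,'v) program \<Rightarrow> ('f,'a) prerun \<Rightarrow> bool" where
  "is_run P R \<longleftrightarrow> pre_run P R \<and>
     (\<forall>t\<ge>0. rho_plus R t \<noteq> rho R t \<longrightarrow>
        (\<exists>S\<subseteq>modules P. rho_plus R t = reduct (exec S (R t))) \<and>
        (\<forall>f. kind P f = External \<longrightarrow> rho R t f = rho_plus R t f)) \<and>
     (\<forall>t>0. rho R t \<noteq> rho_minus R t \<longrightarrow>
        (\<forall>f. kind P f \<noteq> External \<longrightarrow> rho R t f = rho_minus R t f))"

definition fires :: "('f,'v) program \<Rightarrow> ('f,'a) prerun \<Rightarrow> ('f,'v) rule \<Rightarrow> real \<Rightarrow> bool" where
  "fires P R X t \<longleftrightarrow> rho_plus R t \<noteq> rho R t \<and>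
     (\<exists>S\<subseteq>modules P. X \<in> S \<and> rho_plus R t = reduct (exec S (R t)))"

definition immediate :: "('f,'v) program \<Rightarrow> ('f,'a) prerun \<Rightarrow> ('f,'v) rule \<Rightarrow> bool" where
  "immediate P R X \<longleftrightarrow> (\<forall>t\<ge>0. enabled X (R t) \<longrightarrow> fires P R X t)"

end

theory Submission
  imports Defs
begin

(* An immediate agent fires whenever it is enabled, and firing changes the state, so X can
   only be enabled at moments t with rho(t+) \<noteq> rho(t). In a pre-run every such moment in
   [0, B] is a node of the finite partition of [0, B+1] on whose open cells rho is constant,
   so these moments are finite in every bounded interval. Hence they have no limit point, and
   every moment has punctured one-sided neighbourhoods on which X is disabled. *)

definition change_times :: "('f,'a) prerun \<Rightarrow> real set" where
  "change_times R = {t. 0 \<le> t \<and> rho_plus R t \<noteq> rho R t}"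

lemma rho_plus_eq_rho_if_constant:
  assumes "a < t" "t < b" and const: "\<And>s. s \<in> {a<..<b} \<Longrightarrow> rho R s = rho R t"
  shows "rho_plus R t = rho R t"
  unfolding rho_plus_def
proof (rule the_equality)
  show "\<exists>\<epsilon>>0. \<forall>s\<in>{t<..<t+\<epsilon>}. rho R s = rho R t"
    using assms(1,2) by (intro exI[of _ "b - t"]) (auto intro: const)
next
  fix \<sigma> assume "\<exists>\<epsilon>>0. \<forall>s\<in>{t<..<t+\<epsilon>}. rho R s = \<sigma>"
  then obtain e where "e > 0" and e: "\<forall>s\<in>{t<..<t+e}. rho R s = \<sigma>" by blast
  define m where "m = min e (b - t)"
  have "0 < m" "m \<le> e" "m \<le> b - t"
    using \<open>e > 0\<close> assms(2) by (auto simp: m_def)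
  define s where "s = t + m / 2"
  have "s \<in> {t<..<t+e}" "s \<in> {a<..<b}"
    using \<open>0 < m\<close> \<open>m \<le> e\<close> \<open>m \<le> b - t\<close> assms(1) by (auto simp: s_def)
  then show "\<sigma> = rho R t" using e const[of s] by simp
qed

lemma cell_containing_non_node:
  fixes ts :: "nat \<Rightarrow> real"
  assumes "ts 0 \<le> t" "t < ts n" "t \<notin> ts ` {..n}"
  shows "\<exists>i<n. ts i < t \<and> t < ts (Suc i)"
  using assms
proof (induction n)
  case 0
  then show ?case by simp
next
  case (Suc n)
  show ?case
  proof (cases "t < ts n")
    case True
    with Suc show ?thesis using less_Suc_eq by fastforce
  next
    case False
    moreover have "t \<noteq> ts n" using Suc.prems(3) by auto
    ultimately have "ts n < t" by simp
    with Suc.prems show ?thesis by blast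
  qed
qed

lemma pre_run_finite_change_times:
  assumes "pre_run P R"
  shows "finite (change_times R \<inter> {..B})"
proof -
  have "max B 0 + 1 > 0" by simp
  then obtain ts :: "nat \<Rightarrow> real" and n where
    ts: "ts 0 = 0" "ts n = max B 0 + 1"
    and const: "\<forall>i<n. \<forall>s\<in>{ts i<..<ts (Suc i)}. \<forall>s'\<in>{ts i<..<ts (Suc i)}. rho R s = rho R s'"
    using assms unfolding pre_run_def by blast
  have "change_times R \<inter> {..B} \<subseteq> ts ` {..n}"
  proof
    fix t assume t: "t \<in> change_times R \<inter> {..B}"
    show "t \<in> ts ` {..n}"
    proof (rule ccontr)
      assume "t \<notin> ts ` {..n}"
      moreover have "ts 0 \<le> t" "t < ts n" using t ts by (auto simp: change_times_def)
      ultimately obtain i where "i < n" and cell: "ts i < t" "t < ts (Suc i)"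
        using cell_containing_non_node by blast
      have "rho R s = rho R t" if "s \<in> {ts i<..<ts (Suc i)}" for s
      proof -
        have "t \<in> {ts i<..<ts (Suc i)}" using cell by simp
        with that const \<open>i < n\<close> show ?thesis by blast
      qed
      with cell have "rho_plus R t = rho R t" by (rule rho_plus_eq_rho_if_constant)
      with t show False by (simp add: change_times_def)
    qed
  qed
  then show ?thesis by (rule finite_subset) simp
qed

lemma pre_run_not_islimpt_change_times:
  assumes "pre_run P R"
  shows "\<not> x islimpt change_times R"
proof
  assume "x islimpt change_times R"
  then have "infinite (change_times R \<inter> ball x 1)"
    by (simp add: islimpt_eq_infinite_ball)
  moreover have "change_times R \<inter> ball x 1 \<subseteq> change_times R \<inter> {..x + 1}"
    by (auto simp: dist_real_def)
  ultimately show False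
    using pre_run_finite_change_times[OF assms] finite_subset by blast
qed

lemma immediate_enabled_imp_change_time:
  assumes "immediate P R X" "0 \<le> t" "enabled X (R t)"
  shows "t \<in> change_times R"
  using assms by (simp add: immediate_def fires_def change_times_def)

lemma not_islimpt_imp_right_gap:
  fixes x :: real
  assumes "\<not> x islimpt S"
  shows "\<exists>\<epsilon>>0. \<forall>s\<in>{x<..<x+\<epsilon>}. s \<notin> S"
proof -
  have "eventually (\<lambda>s. s \<notin> S) (at_right x)"
    using assms by (simp add: islimpt_iff_eventually eventually_at_split)
  then obtain b where "b > x" "\<forall>s>x. s < b \<longrightarrow> s \<notin> S"
    by (auto simp: eventually_at_right_field)
  then show ?thesis by (intro exI[of _ "b - x"]) auto
qed

lemma not_islimpt_imp_left_gap:
  fixes x :: real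
  assumes "\<not> x islimpt S"
  shows "\<exists>\<epsilon>>0. \<forall>s\<in>{x-\<epsilon><..<x}. s \<notin> S"
proof -
  have "eventually (\<lambda>s. s \<notin> S) (at_left x)"
    using assms by (simp add: islimpt_iff_eventually eventually_at_split)
  then obtain b where "b < x" "\<forall>s>b. s < x \<longrightarrow> s \<notin> S"
    by (auto simp: eventually_at_left_field)
  then show ?thesis by (intro exI[of _ "x - b"]) auto
qed

theorem mainTheorem2:
  fixes P :: "('f,'v) program" and R :: "('f,'a) prerun" and X :: "('f,'v) rule"
  assumes "program_wf P"
    and "is_run P R"
    and "X \<in> modules P"
    and "immediate P R X"
  shows "(\<forall>x\<ge>0. \<not> x islimpt {t. t \<ge> 0 \<and> enabled X (R t)})
     \<and> (\<forall>t\<ge>0. enabled X (R t) \<longrightarrow>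
          (\<exists>\<epsilon>>0. \<forall>s\<in>{t<..<t+\<epsilon>}. \<not> enabled X (R s)) \<and>
          (t > 0 \<longrightarrow> (\<exists>\<epsilon>>0. \<forall>s\<in>{t-\<epsilon><..<t}. \<not> enabled X (R s))))"
proof -
  let ?E = "{t. t \<ge> 0 \<and> enabled X (R t)}"
  have "pre_run P R" using assms(2) by (simp add: is_run_def)
  moreover have "?E \<subseteq> change_times R"
    using immediate_enabled_imp_change_time[OF assms(4)] by blast
  ultimately have isolated: "\<not> x islimpt ?E" for x
    using pre_run_not_islimpt_change_times islimpt_subset by blast
  have "\<exists>\<epsilon>>0. \<forall>s\<in>{t<..<t+\<epsilon>}. \<not> enabled X (R s)" if "t \<ge> 0" for t
    using not_islimpt_imp_right_gap[OF isolated] that by fastforce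
  moreover have "\<exists>\<epsilon>>0. \<forall>s\<in>{t-\<epsilon><..<t}. \<not> enabled X (R s)" if "t > 0" for t
  proof -
    obtain e where "e > 0" "\<forall>s\<in>{t-e<..<t}. s \<notin> ?E"
      using not_islimpt_imp_left_gap[OF isolated] by blast
    with that show ?thesis by (intro exI[of _ "min e t"]) auto
  qed
  ultimately show ?thesis using isolated by auto
qed

end
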